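(* Let $I\subseteq\{1,\dots,n-1\}$ and $r>0$. (1) If $c_1\in(0,\sqrt2-1)$ and $H\le(\sqrt2-1-c_1)\min_{\tau\in I}\frac{r^2nh(\tau)}{\sqrt{2d}}$, then $$\beta^*(\psi_{\mathrm{lin}},\Theta[r],I)\le\sqrt e\exp\Bigl\{-c_1\min_{\tau\in I}\frac{r^2nh(\tau)}{\sqrt{2d}}\Bigr\}.$$ (2) For positive thresholds $T_p$, let $c_2(p,\tau,r)=(1+\sqrt{2/p})^{-1}\frac{r^2nh(\tau)}{T_p\sqrt{2p}}$. Then $$\beta^*(\psi_{\mathrm{scan}},\Theta[r],I)\le\sqrt e\exp\Bigl\{-\min_{p=1,\dots,d}\min_{\tau\in I}\bigl[(c_2(p,\tau,r)-1)T_p\bigr]\Bigr\}.$$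
   Context: Model: for integers $n\ge2$, $d\ge1$ and a fixed baseline mean $\theta\in\mathbb R^d$, we observe independent vectors $X_i=\theta+\Delta\theta_\tau\mathbf 1\{i>\tau\}+\xi_i$, $i=1,\dots,n$, with $\xi_i$ i.i.d. $\mathcal N(0,I_d)$; $\mathbf E_{\Delta\theta_\tau}$ denotes expectation when there is a jump $\Delta\theta_\tau$ at location $\tau$. $V_p^d=\{(\varepsilon_1v_1,\dots,\varepsilon_dv_d):v\in\mathbb R^d,\ \varepsilon_j\in\{0,1\},\ \sum_j\varepsilon_j=p\}$, $\Theta_p[r]=\{v\in V_p^d:\|v\|\ge r\}$, $\Theta[r]=\bigcup_{p=1}^d\Theta_p[r]$, $h(\tau)=\frac\tau n(1-\frac\tau n)$. For $s\in\{1,\dots,n-1\}$, $Z_n(s)=\sqrt{\frac{s(n-s)}n}\bigl(\frac1s\sum_{i=1}^sX_i-\frac1{n-s}\sum_{i=s+1}^nX_i\bigr)$. $\mathcal M(d,p)$ is the family of $p$-element subsets of $\{1,\dots,d\}$; $\Pi_mv$ sets to zero the coordinates of $v$ outside $m$. $L_{\mathrm{lin}}(s)=(\|Z_n(s)\|^2-d)/\sqrt{2d}$, $L_{\mathrm{scan}}(s)=\max_{p=1,\dots,d}\frac1{T_p}\max_{m\in\mathcal M(d,p)}\frac{\|\Pi_mZ_n(s)\|^2-p}{\sqrt{2p}}$. Adaptive tests: $\psi_{\mathrm{lin}}=\mathbf 1\{\max_{s\in I}L_{\mathrm{lin}}(s)>H\}$, $\psi_{\mathrm{scan}}=\mathbf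 1\{\max_{s\in I}L_{\mathrm{scan}}(s)>1\}$. $\beta^*(\psi,\Theta[r],I)=\sup_{\tau\in I}\sup_{\Delta\theta_\tau\in\Theta[r]}\mathbf E_{\Delta\theta_\tau}(1-\psi)$. *)

theory Defs
  imports "HOL-Probability.Probability"
begin

definition noise_space :: "nat \<Rightarrow> nat \<Rightarrow> (nat \<times> nat \<Rightarrow> real) measure" where
  "noise_space n d = PiM ({1..n} \<times> {1..d}) (\<lambda>_. density lborel std_normal_density)"

definition obs :: "(nat \<Rightarrow> real) \<Rightarrow> (nat \<Rightarrow> real) \<Rightarrow> nat \<Rightarrow> (nat \<times> nat \<Rightarrow> real) \<Rightarrow> nat \<Rightarrow> nat \<Rightarrow> real" where
  "obs \<theta> \<Delta> \<tau> \<xi> i j = \<theta> j + (if i > \<tau> then \<Delta> j else 0) + \<xi> (i, j)"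

definition hfun :: "nat \<Rightarrow> nat \<Rightarrow> real" where
  "hfun n \<tau> = (real \<tau> / real n) * (1 - real \<tau> / real n)"

definition Zn :: "nat \<Rightarrow> (nat \<Rightarrow> nat \<Rightarrow> real) \<Rightarrow> nat \<Rightarrow> nat \<Rightarrow> real" where
  "Zn n X s j = sqrt (real s * real (n - s) / real n) *
     ((1 / real s) * (\<Sum>i=1..s. X i j) - (1 / real (n - s)) * (\<Sum>i=s+1..n. X i j))"

definition L_lin :: "nat \<Rightarrow> nat \<Rightarrow> (nat \<Rightarrow> nat \<Rightarrow> real) \<Rightarrow> nat \<Rightarrow> real" where
  "L_lin n d X s = ((\<Sum>j=1..d. (Zn n X s j)\<^sup>2) - real d) / sqrt (2 * real d)"

definition L_scan :: "nat \<Rightarrow> nat \<Rightarrow> (nat \<Rightarrow> real) \<Rightarrow> (nat \<Rightarrow> nat \<Rightarrow> real) \<Rightarrow> nat \<Rightarrow> real" where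
  "L_scan n d T X s = Max ((\<lambda>p. (1 / T p) *
      Max ((\<lambda>m. ((\<Sum>j\<in>m. (Zn n X s j)\<^sup>2) - real p) / sqrt (2 * real p))
           ` {m. m \<subseteq> {1..d} \<and> card m = p})) ` {1..d})"

definition psi_lin :: "nat \<Rightarrow> nat \<Rightarrow> nat set \<Rightarrow> real \<Rightarrow> (nat \<Rightarrow> nat \<Rightarrow> real) \<Rightarrow> real" where
  "psi_lin n d I H X = (if Max ((\<lambda>s. L_lin n d X s) ` I) > H then 1 else 0)"

definition psi_scan :: "nat \<Rightarrow> nat \<Rightarrow> nat set \<Rightarrow> (nat \<Rightarrow> real) \<Rightarrow> (nat \<Rightarrow> nat \<Rightarrow> real) \<Rightarrow> real" where
  "psi_scan n d I T X = (if Max ((\<lambda>s. L_scan n d T X s) ` I) > 1 then 1 else 0)"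

definition Theta :: "nat \<Rightarrow> real \<Rightarrow> (nat \<Rightarrow> real) set" where
  "Theta d r = {v. \<exists>p\<in>{1..d}. \<exists>m. m \<subseteq> {1..d} \<and> card m = p \<and> (\<forall>j. j \<notin> m \<longrightarrow> v j = 0)
                    \<and> sqrt (\<Sum>j=1..d. (v j)\<^sup>2) \<ge> r}"

definition beta_star :: "nat \<Rightarrow> nat \<Rightarrow> (nat \<Rightarrow> real) \<Rightarrow> ((nat \<Rightarrow> nat \<Rightarrow> real) \<Rightarrow> real)
     \<Rightarrow> real \<Rightarrow> nat set \<Rightarrow> real" where
  "beta_star n d \<theta> \<psi> r I = (SUP (\<tau>, \<Delta>) \<in> I \<times> Theta d r.
      (\<integral>\<xi>. 1 - \<psi> (obs \<theta> \<Delta> \<tau> \<xi>) \<partial>(noise_space n d)))"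

end

(*
  At the true change point the CUSUM vector is Gaussian: Z_n(tau) is a linear
  combination of the observations whose weights sum to 0 and have squares summing
  to 1, so under a jump Delta at tau it equals W - sqrt (n h(tau)) Delta with W
  standard normal in R^d.  Both tests accept only if, at s = tau, a statistic
  (|Pi_m Z_n(tau)|^2 - p) / sqrt (2p) stays below its threshold t, so the type II
  error is bounded by a lower tail of a noncentral chi-square law.  The Chernoff
  bound with parameter lambda = 1 / sqrt (2p), using
  E exp (-lambda (mu + N)^2) = exp (-lambda mu^2 / (1 + 2 lambda)) / sqrt (1 + 2 lambda)
  and ln (1 + x) >= x - x^2/2, bounds this tail by
  sqrt e * exp (t - |mu|^2 / (sqrt (2p) + 2)), and |mu|^2 >= r^2 n h(tau).
*)
theory Submission
  imports Defs
begin

section \<open>Gaussian integrals and the noncentral chi-square lower tail\<close>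

lemma ln_one_plus_ge_sub_half_sq:
  fixes x :: real
  assumes "0 \<le> x"
  shows "x - x\<^sup>2 / 2 \<le> ln (1 + x)"
proof -
  let ?g = "\<lambda>t::real. ln (1 + t) - t + t\<^sup>2 / 2"
  have "?g 0 \<le> ?g x"
  proof (rule DERIV_nonneg_imp_increasing_open[OF assms])
    fix t :: real assume t: "0 < t" "t < x"
    have "DERIV ?g t :> t\<^sup>2 / (1 + t)"
      using t by (auto intro!: derivative_eq_intros simp: power2_eq_square field_simps)
    then show "\<exists>y. DERIV ?g t :> y \<and> 0 \<le> y"
      using t by auto
  qed (intro continuous_intros, auto)
  then show ?thesis by simp
qed

lemma inverse_sqrt_one_plus_power_le:
  fixes l :: real
  assumes "0 < l"
  shows "(1 / sqrt (1 + 2 * l)) ^ k \<le> exp (- real k * l + real k * l\<^sup>2)"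
proof -
  have "l - l\<^sup>2 \<le> ln (1 + 2 * l) / 2"
    using ln_one_plus_ge_sub_half_sq[of "2 * l"] assms by (simp add: power2_eq_square)
  then have "real k * (- ln (1 + 2 * l) / 2) \<le> real k * (l\<^sup>2 - l)"
    by (intro mult_left_mono) auto
  moreover have "sqrt (1 + 2 * l) ^ k = exp (real k * ln (sqrt (1 + 2 * l)))"
    using assms by (simp add: exp_of_nat_mult)
  then have "(1 / sqrt (1 + 2 * l)) ^ k = exp (real k * (- ln (1 + 2 * l) / 2))"
    using assms by (simp add: exp_minus ln_sqrt[symmetric] power_one_over inverse_eq_divide)
  ultimately show ?thesis by (simp add: algebra_simps)
qed

lemma std_normal_density_mult_exp_neg_sq:
  fixes l \<mu> x :: real
  assumes "0 < l"
  defines "q \<equiv> 1 + 2 * l"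
  shows "std_normal_density x * exp (- l * (\<mu> + x)\<^sup>2) =
    exp (- l * \<mu>\<^sup>2 / q) / sqrt q * normal_density (- 2 * l * \<mu> / q) (1 / sqrt q) x"
proof -
  have q: "0 < q" using assms by simp
  have "2 * q * (- x\<^sup>2 / 2 + - l * (\<mu> + x)\<^sup>2) = - 2 * l * \<mu>\<^sup>2 - (q * x + 2 * l * \<mu>)\<^sup>2"
    unfolding q_def by (simp add: power2_eq_square algebra_simps)
  also have "\<dots> = 2 * q * (- l * \<mu>\<^sup>2 / q + - (x - - 2 * l * \<mu> / q)\<^sup>2 / (2 * (1 / sqrt q)\<^sup>2))"
    using q by (simp add: field_simps power2_eq_square)
  finally have "exp (- x\<^sup>2 / 2) * exp (- l * (\<mu> + x)\<^sup>2) =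
      exp (- l * \<mu>\<^sup>2 / q) * exp (- (x - - 2 * l * \<mu> / q)\<^sup>2 / (2 * (1 / sqrt q)\<^sup>2))"
    using q by (simp only: mult_exp_exp) simp
  moreover have "1 / sqrt (2 * pi * (1 / sqrt q)\<^sup>2) = sqrt q / sqrt (2 * pi)"
    using q by (simp add: power_divide real_sqrt_divide)
  ultimately show ?thesis
    using q unfolding std_normal_density_def normal_density_def by simp
qed

lemma nn_integral_exp_neg_sq_std_normal:
  fixes l \<mu> :: real
  assumes X: "distributed M lborel X std_normal_density" and l: "0 < l"
  shows "(\<integral>\<^sup>+\<omega>. exp (- l * (\<mu> + X \<omega>)\<^sup>2) \<partial>M) =
    exp (- l * \<mu>\<^sup>2 / (1 + 2 * l)) / sqrt (1 + 2 * l)"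
proof -
  define q where "q = 1 + 2 * l"
  define C where "C = exp (- l * \<mu>\<^sup>2 / q) / sqrt q"
  have q: "0 < q" and C: "0 \<le> C" using l by (simp_all add: q_def C_def)
  have "(\<integral>\<^sup>+\<omega>. exp (- l * (\<mu> + X \<omega>)\<^sup>2) \<partial>M) =
      (\<integral>\<^sup>+x. ennreal (std_normal_density x) * exp (- l * (\<mu> + x)\<^sup>2) \<partial>lborel)"
    by (rule distributed_nn_integral[OF X, symmetric]) simp
  also have "\<dots> = (\<integral>\<^sup>+x. C * ennreal (normal_density (- 2 * l * \<mu> / q) (1 / sqrt q) x) \<partial>lborel)"
  proof (intro nn_integral_cong)
    fix x
    have "ennreal (std_normal_density x) * exp (- l * (\<mu> + x)\<^sup>2) =
        ennreal (std_normal_density x * exp (- l * (\<mu> + x)\<^sup>2))"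
      by (simp add: ennreal_mult')
    also have "\<dots> = C * ennreal (normal_density (- 2 * l * \<mu> / q) (1 / sqrt q) x)"
      unfolding std_normal_density_mult_exp_neg_sq[OF l, where \<mu> = \<mu> and x = x, folded q_def, folded C_def]
      by (rule ennreal_mult'[OF C])
    finally show "ennreal (std_normal_density x) * exp (- l * (\<mu> + x)\<^sup>2) =
        C * ennreal (normal_density (- 2 * l * \<mu> / q) (1 / sqrt q) x)" .
  qed
  also have "\<dots> = C"
    using q by (simp add: nn_integral_cmult nn_integral_eq_integral)
  finally show ?thesis by (simp add: C_def q_def)
qed

lemma (in prob_space) nn_integral_exp_neg_noncentral_chi_square:
  fixes W :: "'i \<Rightarrow> 'a \<Rightarrow> real" and \<mu> :: "'i \<Rightarrow> real"
  assumes J: "finite J" and indep: "indep_vars (\<lambda>_. borel) W J"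
    and normal: "\<And>j. j \<in> J \<Longrightarrow> distributed M lborel (W j) std_normal_density"
    and l: "0 < l"
  shows "(\<integral>\<^sup>+\<omega>. exp (- l * (\<Sum>j\<in>J. (\<mu> j + W j \<omega>)\<^sup>2)) \<partial>M) =
    ennreal (exp (- l * (\<Sum>j\<in>J. (\<mu> j)\<^sup>2) / (1 + 2 * l)) * (1 / sqrt (1 + 2 * l)) ^ card J)"
proof -
  have "(\<integral>\<^sup>+\<omega>. exp (- l * (\<Sum>j\<in>J. (\<mu> j + W j \<omega>)\<^sup>2)) \<partial>M) =
      (\<integral>\<^sup>+\<omega>. (\<Prod>j\<in>J. ennreal (exp (- l * (\<mu> j + W j \<omega>)\<^sup>2))) \<partial>M)"
    using J by (simp add: exp_sum[symmetric] sum_distrib_left prod_ennreal)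
  also have "\<dots> = (\<Prod>j\<in>J. \<integral>\<^sup>+\<omega>. exp (- l * (\<mu> j + W j \<omega>)\<^sup>2) \<partial>M)"
    by (intro indep_vars_nn_integral J indep_vars_compose2[OF indep]) auto
  also have "\<dots> = (\<Prod>j\<in>J. ennreal (exp (- l * (\<mu> j)\<^sup>2 / (1 + 2 * l)) / sqrt (1 + 2 * l)))"
    by (intro prod.cong refl nn_integral_exp_neg_sq_std_normal[OF normal l])
  also have "\<dots> = (\<Prod>j\<in>J. exp (- l * (\<mu> j)\<^sup>2 / (1 + 2 * l)) / sqrt (1 + 2 * l))"
    using l by (intro prod_ennreal) (auto intro!: divide_nonneg_nonneg)
  also have "\<dots> = ennreal (exp (- l * (\<Sum>j\<in>J. (\<mu> j)\<^sup>2) / (1 + 2 * l)) * (1 / sqrt (1 + 2 * l)) ^ card J)"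
    using J by (simp add: prod_dividef exp_sum[symmetric] sum_distrib_left sum_divide_distrib
        power_one_over)
  finally show ?thesis .
qed

(* f stands for the indicator of acceptance; it need not be measurable, since a
   non-integrable f has integral 0. *)
lemma (in prob_space) chernoff_noncentral_chi_square_lower_tail:
  fixes W :: "'i \<Rightarrow> 'a \<Rightarrow> real" and \<mu> :: "'i \<Rightarrow> real"
  assumes J: "finite J" and indep: "indep_vars (\<lambda>_. borel) W J"
    and normal: "\<And>j. j \<in> J \<Longrightarrow> distributed M lborel (W j) std_normal_density"
    and l: "0 < l" and f: "\<And>\<omega>. 0 \<le> f \<omega>" "\<And>\<omega>. f \<omega> \<le> 1"
    and accept: "\<And>\<omega>. \<omega> \<in> space M \<Longrightarrow> f \<omega> \<noteq> 0 \<Longrightarrow> (\<Sum>j\<in>J. (\<mu> j + W j \<omega>)\<^sup>2) \<le> a"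
  shows "expectation f \<le> exp (l * a) *
    (exp (- l * (\<Sum>j\<in>J. (\<mu> j)\<^sup>2) / (1 + 2 * l)) * (1 / sqrt (1 + 2 * l)) ^ card J)"
    (is "_ \<le> exp (l * a) * ?E")
proof -
  define g where "g \<omega> = exp (- l * (\<Sum>j\<in>J. (\<mu> j + W j \<omega>)\<^sup>2))" for \<omega>
  have E: "0 \<le> ?E" using l by simp
  have f_le: "f \<omega> \<le> exp (l * a) * g \<omega>" if "\<omega> \<in> space M" for \<omega>
  proof (cases "f \<omega> = 0")
    case False
    have "1 \<le> exp (l * (a - (\<Sum>j\<in>J. (\<mu> j + W j \<omega>)\<^sup>2)))"
      using accept[OF that False] l by simp
    also have "\<dots> = exp (l * a) * g \<omega>"
      by (simp add: g_def mult_exp_exp algebra_simps)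
    finally show ?thesis using f(2)[of \<omega>] by linarith
  qed (simp add: g_def)
  show ?thesis
  proof (cases "integrable M f")
    case False
    then show ?thesis using E by (simp add: not_integrable_integral_eq)
  next
    case True
    have "\<And>j. j \<in> J \<Longrightarrow> W j \<in> borel_measurable M"
      using distributed_measurable[OF normal] by simp
    then have g_meas: "g \<in> borel_measurable M"
      unfolding g_def by measurable
    have "ennreal (expectation f) = (\<integral>\<^sup>+\<omega>. f \<omega> \<partial>M)"
      using True f by (simp add: nn_integral_eq_integral)
    also have "\<dots> \<le> (\<integral>\<^sup>+\<omega>. exp (l * a) * ennreal (g \<omega>) \<partial>M)"
      using f_le by (intro nn_integral_mono) (simp add: ennreal_mult'[symmetric] ennreal_leI)
    also have "\<dots> = exp (l * a) * (\<integral>\<^sup>+\<omega>. g \<omega> \<partial>M)"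
      using g_meas by (simp add: nn_integral_cmult)
    also have "(\<integral>\<^sup>+\<omega>. g \<omega> \<partial>M) = ennreal ?E"
      unfolding g_def by (rule nn_integral_exp_neg_noncentral_chi_square[OF J indep normal l])
    also have "exp (l * a) * ennreal ?E = ennreal (exp (l * a) * ?E)"
      by (rule ennreal_mult'[symmetric]) simp
    finally show ?thesis using E by simp
  qed
qed

lemma (in prob_space) noncentral_chi_square_lower_tail:
  fixes W :: "'i \<Rightarrow> 'a \<Rightarrow> real" and \<mu> :: "'i \<Rightarrow> real"
  assumes J: "finite J" "J \<noteq> {}" and indep: "indep_vars (\<lambda>_. borel) W J"
    and normal: "\<And>j. j \<in> J \<Longrightarrow> distributed M lborel (W j) std_normal_density"
    and f: "\<And>\<omega>. 0 \<le> f \<omega>" "\<And>\<omega>. f \<omega> \<le> 1"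
    and accept: "\<And>\<omega>. \<omega> \<in> space M \<Longrightarrow> f \<omega> \<noteq> 0 \<Longrightarrow>
      ((\<Sum>j\<in>J. (\<mu> j + W j \<omega>)\<^sup>2) - real (card J)) / sqrt (2 * real (card J)) \<le> t"
  shows "expectation f \<le> sqrt (exp 1) * exp (t - (\<Sum>j\<in>J. (\<mu> j)\<^sup>2) / (sqrt (2 * real (card J)) + 2))"
proof -
  define k where "k = card J"
  define s where "s = sqrt (2 * k)"
  define S where "S = (\<Sum>j\<in>J. (\<mu> j)\<^sup>2)"
  have k: "0 < k" using J by (simp add: k_def card_gt_0_iff)
  have s: "0 < s" "s\<^sup>2 = 2 * k" using k by (simp_all add: s_def)
  have l: "0 < 1 / s" using s by simp
  have "expectation f \<le>
      exp (1 / s * (k + s * t)) * (exp (- (1 / s) * S / (1 + 2 * (1 / s))) * (1 / sqrt (1 + 2 * (1 / s))) ^ k)"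
    unfolding S_def k_def
  proof (rule chernoff_noncentral_chi_square_lower_tail[OF J(1) indep normal l f])
    fix \<omega> assume "\<omega> \<in> space M" "f \<omega> \<noteq> 0"
    from accept[OF this] show "(\<Sum>j\<in>J. (\<mu> j + W j \<omega>)\<^sup>2) \<le> card J + s * t"
      using s by (simp add: k_def s_def divide_le_eq mult.commute)
  qed
  also have "\<dots> \<le> exp (1 / s * (k + s * t)) * (exp (- S / (s + 2)) * exp (- k * (1 / s) + k * (1 / s)\<^sup>2))"
    using s inverse_sqrt_one_plus_power_le[OF l, of k]
    by (intro mult_left_mono) (simp_all add: field_simps)
  also have "\<dots> = exp (1 / 2) * exp (t - S / (s + 2))"
  proof -
    have "(1 / s)\<^sup>2 = 1 / (2 * k)"
      using s(2) by (simp add: power_divide)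
    then have "k * (1 / s)\<^sup>2 = 1 / 2"
      using k by simp
    moreover have "1 / s * (k + s * t) = k / s + t"
      using s by (simp add: field_simps)
    ultimately have "1 / s * (k + s * t) + (- S / (s + 2) + (- k * (1 / s) + k * (1 / s)\<^sup>2)) =
        1 / 2 + (t - S / (s + 2))"
      by simp
    then show ?thesis by (simp only: mult_exp_exp)
  qed
  also have "exp (1 / 2 :: real) = sqrt (exp 1)"
    by (rule real_sqrt_unique[symmetric]) (simp_all add: exp_of_nat_mult[symmetric])
  finally show ?thesis by (simp add: S_def s_def k_def)
qed

section \<open>Independent standard normal noise\<close>

lemma indep_vars_PiM_components:
  assumes M: "\<And>i. i \<in> K \<Longrightarrow> prob_space (M i)"
  shows "prob_space.indep_vars (PiM K M) M (\<lambda>i \<omega>. \<omega> i) K"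
proof -
  interpret prob_space "PiM K M" by (rule prob_space_PiM[OF M])
  show ?thesis
  proof (cases "K = {}")
    case True
    show ?thesis unfolding indep_vars_def indep_sets_def using True by simp
  next
    case False
    have "distr (PiM K M) (PiM K M) (\<lambda>\<omega>. restrict \<omega> K) = distr (PiM K M) (PiM K M) (\<lambda>\<omega>. \<omega>)"
      by (rule distr_cong) (auto simp: space_PiM)
    also have "\<dots> = PiM K (\<lambda>i. distr (PiM K M) (M i) (\<lambda>\<omega>. \<omega> i))"
      using M by (simp add: distr_PiM_component cong: PiM_cong)
    finally show ?thesis
      using False by (subst indep_vars_iff_distr_eq_PiM') auto
  qed
qed

lemma prob_space_noise_space: "prob_space (noise_space n d)"
  unfolding noise_space_def by (intro prob_space_PiM prob_space_normal_density) simp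

lemma indep_vars_noise_space_components:
  "prob_space.indep_vars (noise_space n d) (\<lambda>_. density lborel std_normal_density)
     (\<lambda>k \<xi>. \<xi> k) ({1..n} \<times> {1..d})"
  unfolding noise_space_def by (intro indep_vars_PiM_components prob_space_normal_density) simp

lemma distributed_noise_space_component:
  assumes "k \<in> {1..n} \<times> {1..d}"
  shows "distributed (noise_space n d) lborel (\<lambda>\<xi>. \<xi> k) std_normal_density"
proof -
  let ?N = "density lborel std_normal_density"
  have "distr (noise_space n d) lborel (\<lambda>\<xi>. \<xi> k) = distr (noise_space n d) ?N (\<lambda>\<xi>. \<xi> k)"
    by (rule distr_cong) auto
  also have "\<dots> = ?N"
    unfolding noise_space_def using assms
    by (intro distr_PiM_component prob_space_normal_density) auto
  finally show ?thesis
    using assms unfolding distributed_def noise_space_def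
    by (auto simp: measurable_component_singleton)
qed

section \<open>The CUSUM statistic at the change point\<close>

definition cusum_weight :: "nat \<Rightarrow> nat \<Rightarrow> nat \<Rightarrow> real" where
  "cusum_weight n s i = (if i \<le> s then sqrt (real s * real (n - s) / real n) / real s
     else - sqrt (real s * real (n - s) / real n) / real (n - s))"

definition cusum_noise :: "nat \<Rightarrow> nat \<Rightarrow> (nat \<times> nat \<Rightarrow> real) \<Rightarrow> nat \<Rightarrow> real" where
  "cusum_noise n s \<xi> j = (\<Sum>i=1..n. cusum_weight n s i * \<xi> (i, j))"

lemma sum_atLeastAtMost_split:
  fixes f :: "nat \<Rightarrow> 'a::comm_monoid_add"
  assumes "s \<le> n"
  shows "(\<Sum>i=1..n. f i) = (\<Sum>i=1..s. f i) + (\<Sum>i=s+1..n. f i)"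
  using sum.ub_add_nat[of 1 s f "n - s"] assms by simp

lemma real_mult_hfun: "s \<le> n \<Longrightarrow> real n * hfun n s = real s * real (n - s) / real n"
  by (cases "n = 0") (auto simp: hfun_def field_simps)

lemma Zn_eq_sum_cusum_weight:
  assumes "s \<le> n"
  shows "Zn n X s j = (\<Sum>i=1..n. cusum_weight n s i * X i j)"
  unfolding sum_atLeastAtMost_split[OF assms] Zn_def
  by (simp add: cusum_weight_def sum_distrib_left sum_divide_distrib sum_negf right_diff_distrib)

lemma cusum_weight_nonzero: "1 \<le> s \<Longrightarrow> s < n \<Longrightarrow> cusum_weight n s i \<noteq> 0"
  by (simp add: cusum_weight_def)

lemma sum_cusum_weight_after:
  assumes "s < n"
  shows "(\<Sum>i=s+1..n. cusum_weight n s i) = - sqrt (real n * hfun n s)"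
  using assms by (simp add: cusum_weight_def real_mult_hfun)

lemma sum_cusum_weight:
  assumes "1 \<le> s" "s < n"
  shows "(\<Sum>i=1..n. cusum_weight n s i) = 0"
  unfolding sum_atLeastAtMost_split[OF less_imp_le[OF assms(2)]]
  using assms by (simp add: cusum_weight_def)

lemma sum_cusum_weight_sq:
  assumes "1 \<le> s" "s < n"
  shows "(\<Sum>i=1..n. (cusum_weight n s i)\<^sup>2) = 1"
proof -
  define a b where "a = real s" and "b = real (n - s)"
  have ab: "0 < a" "0 < b" "real n = a + b"
    using assms by (auto simp: a_def b_def)
  have "(\<Sum>i=1..n. (cusum_weight n s i)\<^sup>2) =
      a * (sqrt (a * b / real n) / a)\<^sup>2 + b * (sqrt (a * b / real n) / b)\<^sup>2"
    unfolding sum_atLeastAtMost_split[OF less_imp_le[OF assms(2)]]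
    using assms by (simp add: cusum_weight_def a_def b_def del: of_nat_diff)
  also have "\<dots> = b / real n + a / real n"
    using ab(1,2) \<open>1 \<le> s\<close> by (simp add: field_simps power2_eq_square)
  also have "\<dots> = 1"
    using ab by (simp add: add_divide_distrib[symmetric])
  finally show ?thesis .
qed

lemma Zn_obs_at_change_point:
  assumes "1 \<le> \<tau>" "\<tau> < n"
  shows "Zn n (obs \<theta> \<Delta> \<tau> \<xi>) \<tau> j = cusum_noise n \<tau> \<xi> j - sqrt (real n * hfun n \<tau>) * \<Delta> j"
proof -
  have jump: "(\<Sum>i=1..n. cusum_weight n \<tau> i * (if \<tau> < i then \<Delta> j else 0)) =
      (\<Sum>i=\<tau>+1..n. cusum_weight n \<tau> i) * \<Delta> j"
    unfolding sum_atLeastAtMost_split[OF less_imp_le[OF assms(2)]]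
    by (simp add: sum_distrib_right)
  have "Zn n (obs \<theta> \<Delta> \<tau> \<xi>) \<tau> j =
      (\<Sum>i=1..n. cusum_weight n \<tau> i * (\<theta> j + (if \<tau> < i then \<Delta> j else 0) + \<xi> (i, j)))"
    unfolding Zn_eq_sum_cusum_weight[OF less_imp_le[OF assms(2)]] obs_def ..
  also have "\<dots> = \<theta> j * (\<Sum>i=1..n. cusum_weight n \<tau> i) +
      (\<Sum>i=1..n. cusum_weight n \<tau> i * (if \<tau> < i then \<Delta> j else 0)) + cusum_noise n \<tau> \<xi> j"
    by (simp add: cusum_noise_def distrib_left sum.distrib sum_distrib_left mult.commute)
  also have "\<dots> = cusum_noise n \<tau> \<xi> j - sqrt (real n * hfun n \<tau>) * \<Delta> j"
    unfolding jump sum_cusum_weight[OF assms] sum_cusum_weight_after[OF assms(2)] by simp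
  finally show ?thesis .
qed

lemma distributed_cusum_noise:
  assumes s: "1 \<le> s" "s < n" and j: "j \<in> {1..d}"
  shows "distributed (noise_space n d) lborel (\<lambda>\<xi>. cusum_noise n s \<xi> j) std_normal_density"
proof -
  interpret prob_space "noise_space n d" by (rule prob_space_noise_space)
  let ?N = "density lborel std_normal_density"
  have "indep_vars (\<lambda>i. PiM {(i, j)} (\<lambda>_. ?N)) (\<lambda>i \<xi>. restrict \<xi> {(i, j)}) {1..n}"
    using indep_vars_restrict[OF indep_vars_noise_space_components, of "{1..n}" "\<lambda>i. {(i, j)}"] j
    by (auto simp: disjoint_family_on_def)
  then have "indep_vars (\<lambda>_. borel)
      (\<lambda>i \<xi>. cusum_weight n s i * restrict \<xi> {(i, j)} (i, j)) {1..n}"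
    by (rule indep_vars_compose2[where Y = "\<lambda>i x. cusum_weight n s i * x (i, j)"])
      measurable
  then have indep: "indep_vars (\<lambda>_. borel) (\<lambda>i \<xi>. cusum_weight n s i * \<xi> (i, j)) {1..n}"
    by simp
  have "distributed (noise_space n d) lborel (\<lambda>\<xi>. cusum_weight n s i * \<xi> (i, j))
      (normal_density 0 \<bar>cusum_weight n s i\<bar>)" if "i \<in> {1..n}" for i
  proof -
    have "distributed (noise_space n d) lborel (\<lambda>\<xi>. \<xi> (i, j)) (normal_density 0 1)"
      using distributed_noise_space_component[of "(i, j)"] that j by simp
    from normal_density_affine[OF this, where \<alpha> = "cusum_weight n s i" and \<beta> = 0]
    show ?thesis using cusum_weight_nonzero[OF s] by simp
  qed
  from sum_indep_normal[OF _ _ indep _ this] s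
  have "distributed (noise_space n d) lborel (\<lambda>\<xi>. cusum_noise n s \<xi> j)
      (normal_density 0 (sqrt (\<Sum>i=1..n. (cusum_weight n s i)\<^sup>2)))"
    using cusum_weight_nonzero[OF s] by (simp add: cusum_noise_def)
  then show ?thesis unfolding sum_cusum_weight_sq[OF s] by simp
qed

lemma indep_vars_cusum_noise:
  assumes "J \<subseteq> {1..d}"
  shows "prob_space.indep_vars (noise_space n d) (\<lambda>_. borel) (\<lambda>j \<xi>. cusum_noise n s \<xi> j) J"
proof -
  interpret prob_space "noise_space n d" by (rule prob_space_noise_space)
  let ?N = "density lborel std_normal_density"
  have "indep_vars (\<lambda>j. PiM ({1..n} \<times> {j}) (\<lambda>_. ?N)) (\<lambda>j \<xi>. restrict \<xi> ({1..n} \<times> {j})) J"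
    using indep_vars_restrict[OF indep_vars_noise_space_components, of J "\<lambda>j. {1..n} \<times> {j}"] assms
    by (auto simp: disjoint_family_on_def)
  then have "indep_vars (\<lambda>_. borel)
      (\<lambda>j \<xi>. \<Sum>i=1..n. cusum_weight n s i * restrict \<xi> ({1..n} \<times> {j}) (i, j)) J"
    by (rule indep_vars_compose2[where Y = "\<lambda>j x. \<Sum>i=1..n. cusum_weight n s i * x (i, j)"])
      measurable
  then show ?thesis
    unfolding cusum_noise_def by simp
qed

lemma cusum_statistic_lower_tail:
  assumes \<tau>: "1 \<le> \<tau>" "\<tau> < n" and J: "J \<subseteq> {1..d}" "J \<noteq> {}"
    and f: "\<And>\<xi>. 0 \<le> f \<xi>" "\<And>\<xi>. f \<xi> \<le> 1"
    and accept: "\<And>\<xi>. f \<xi> \<noteq> 0 \<Longrightarrow>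
      ((\<Sum>j\<in>J. (Zn n (obs \<theta> \<Delta> \<tau> \<xi>) \<tau> j)\<^sup>2) - real (card J)) / sqrt (2 * real (card J)) \<le> t"
    and energy: "r\<^sup>2 \<le> (\<Sum>j\<in>J. (\<Delta> j)\<^sup>2)"
  shows "(\<integral>\<xi>. f \<xi> \<partial>noise_space n d) \<le>
    sqrt (exp 1) * exp (t - r\<^sup>2 * real n * hfun n \<tau> / (sqrt (2 * real (card J)) + 2))"
proof -
  interpret prob_space "noise_space n d" by (rule prob_space_noise_space)
  have fin: "finite J" using J(1) finite_subset by blast
  have nh: "0 \<le> real n * hfun n \<tau>" using \<tau> by (simp add: real_mult_hfun)
  have "expectation f \<le> sqrt (exp 1) *
      exp (t - (\<Sum>j\<in>J. (- sqrt (real n * hfun n \<tau>) * \<Delta> j)\<^sup>2) / (sqrt (2 * real (card J)) + 2))"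
  proof (rule noncentral_chi_square_lower_tail[OF fin J(2) indep_vars_cusum_noise[OF J(1)] _ f])
    show "distributed (noise_space n d) lborel (\<lambda>\<xi>. cusum_noise n \<tau> \<xi> j) std_normal_density"
      if "j \<in> J" for j
      using distributed_cusum_noise[OF \<tau>] J(1) that by blast
    fix \<xi> assume "f \<xi> \<noteq> 0"
    from accept[OF this] show "((\<Sum>j\<in>J. (- sqrt (real n * hfun n \<tau>) * \<Delta> j + cusum_noise n \<tau> \<xi> j)\<^sup>2) -
        real (card J)) / sqrt (2 * real (card J)) \<le> t"
      by (simp add: Zn_obs_at_change_point[OF \<tau>])
  qed
  also have "(\<Sum>j\<in>J. (- sqrt (real n * hfun n \<tau>) * \<Delta> j)\<^sup>2) = real n * hfun n \<tau> * (\<Sum>j\<in>J. (\<Delta> j)\<^sup>2)"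
    using nh by (simp add: power_mult_distrib sum_distrib_left)
  also have "sqrt (exp 1) * exp (t - real n * hfun n \<tau> * (\<Sum>j\<in>J. (\<Delta> j)\<^sup>2) / (sqrt (2 * real (card J)) + 2))
      \<le> sqrt (exp 1) * exp (t - r\<^sup>2 * real n * hfun n \<tau> / (sqrt (2 * real (card J)) + 2))"
    using mult_left_mono[OF energy nh]
    by (intro mult_left_mono exp_le_cancel_iff[THEN iffD2] diff_left_mono divide_right_mono)
      (simp_all add: mult_ac)
  finally show ?thesis .
qed

section \<open>Type II errors of the two tests\<close>

lemma Theta_nonempty:
  assumes "1 \<le> d"
  shows "Theta d r \<noteq> {}"
proof -
  let ?v = "\<lambda>j::nat. if j = 1 then \<bar>r\<bar> else 0"
  have "(\<Sum>j=1..d. (?v j)\<^sup>2) = (\<Sum>j=1..d. if j = 1 then r\<^sup>2 else 0)"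
    by (intro sum.cong) auto
  also have "\<dots> = r\<^sup>2"
    using assms by simp
  finally have "?v \<in> Theta d r"
    unfolding Theta_def using assms by (intro CollectI bexI[of _ 1] exI[of _ "{1}"]) auto
  then show ?thesis by blast
qed

lemma Theta_sum_sq_ge:
  assumes "\<Delta> \<in> Theta d r" "0 \<le> r"
  shows "r\<^sup>2 \<le> (\<Sum>j=1..d. (\<Delta> j)\<^sup>2)"
proof -
  have "r \<le> sqrt (\<Sum>j=1..d. (\<Delta> j)\<^sup>2)"
    using assms(1) unfolding Theta_def by blast
  then have "r\<^sup>2 \<le> (sqrt (\<Sum>j=1..d. (\<Delta> j)\<^sup>2))\<^sup>2"
    using assms(2) by (rule power_mono)
  then show ?thesis by (simp add: sum_nonneg)
qed

lemma Theta_support: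
  assumes "\<Delta> \<in> Theta d r" "0 \<le> r"
  obtains m where "m \<subseteq> {1..d}" "m \<noteq> {}" "r\<^sup>2 \<le> (\<Sum>j\<in>m. (\<Delta> j)\<^sup>2)"
proof -
  from assms(1) obtain p m where p: "p \<in> {1..d}" and m: "m \<subseteq> {1..d}" "card m = p"
    and support: "\<forall>j. j \<notin> m \<longrightarrow> \<Delta> j = 0"
    unfolding Theta_def by blast
  have "m \<noteq> {}" using p m(2) by auto
  moreover have "(\<Sum>j\<in>m. (\<Delta> j)\<^sup>2) = (\<Sum>j=1..d. (\<Delta> j)\<^sup>2)"
    using m(1) support by (intro sum.mono_neutral_left) auto
  ultimately show ?thesis
    using that[OF m(1)] Theta_sum_sq_ge[OF assms] by simp
qed

lemma beta_star_le:
  assumes "I \<noteq> {}" "Theta d r \<noteq> {}"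
    and "\<And>\<tau> \<Delta>. \<tau> \<in> I \<Longrightarrow> \<Delta> \<in> Theta d r \<Longrightarrow> (\<integral>\<xi>. 1 - \<psi> (obs \<theta> \<Delta> \<tau> \<xi>) \<partial>noise_space n d) \<le> B"
  shows "beta_star n d \<theta> \<psi> r I \<le> B"
  unfolding beta_star_def using assms by (intro cSUP_least) auto

lemma L_lin_le_of_not_psi_lin:
  assumes "psi_lin n d I H X \<noteq> 1" "finite I" "s \<in> I"
  shows "L_lin n d X s \<le> H"
proof -
  have "L_lin n d X s \<le> Max ((\<lambda>s. L_lin n d X s) ` I)"
    using assms(2,3) by (intro Max_ge) auto
  then show ?thesis
    using assms(1) unfolding psi_lin_def by (auto split: if_splits)
qed

lemma scan_statistic_le_of_not_psi_scan:
  assumes "psi_scan n d I T X \<noteq> 1" "finite I" "s \<in> I"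
    and m: "m \<subseteq> {1..d}" "m \<noteq> {}" and T: "0 < T (card m)"
  shows "((\<Sum>j\<in>m. (Zn n X s j)\<^sup>2) - real (card m)) / sqrt (2 * real (card m)) \<le> T (card m)"
proof -
  let ?Q = "\<lambda>p m. ((\<Sum>j\<in>m. (Zn n X s j)\<^sup>2) - real p) / sqrt (2 * real p)"
  let ?M = "\<lambda>p. {m. m \<subseteq> {1..d} \<and> card m = p}"
  have p: "card m \<in> {1..d}"
    using m by (auto simp: card_gt_0_iff Suc_le_eq intro: finite_subset card_mono[of "{1..d}", simplified])
  have "finite (?M p)" for p
    by (rule finite_subset[of _ "Pow {1..d}"]) auto
  then have "?Q (card m) m \<le> Max (?Q (card m) ` ?M (card m))"
    using m by (intro Max_ge) auto
  also have "\<dots> \<le> T (card m) * L_scan n d T X s"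
  proof -
    have "1 / T (card m) * Max (?Q (card m) ` ?M (card m)) \<le> L_scan n d T X s"
      unfolding L_scan_def using p by (intro Max_ge) auto
    then show ?thesis using T by (simp add: field_simps)
  qed
  also have "\<dots> \<le> T (card m)"
  proof -
    have "L_scan n d T X s \<le> Max ((\<lambda>s. L_scan n d T X s) ` I)"
      using assms(2,3) by (intro Max_ge) auto
    then have "L_scan n d T X s \<le> 1"
      using assms(1) unfolding psi_scan_def by (auto split: if_splits)
    then show ?thesis using T by simp
  qed
  finally show ?thesis .
qed

lemma sqrt2_minus_one_mult_divide_le:
  fixes s S :: real
  assumes "sqrt 2 \<le> s" "0 \<le> S"
  shows "(sqrt 2 - 1) * (S / s) \<le> S / (s + 2)"
proof -
  have s: "0 < s" using assms(1) by (rule less_le_trans[rotated]) simp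
  have "sqrt 2 * (2 - sqrt 2) \<le> s * (2 - sqrt 2)"
    using assms(1) sqrt2_less_2 by (intro mult_right_mono) auto
  then have "(sqrt 2 - 1) * (s + 2) \<le> s"
    by (simp add: algebra_simps)
  then have "S * ((sqrt 2 - 1) * (s + 2)) \<le> S * s"
    using assms(2) by (rule mult_left_mono)
  then show ?thesis
    using s by (simp add: field_simps)
qed

lemma type_II_error_psi_lin_le:
  assumes d: "1 \<le> d" and I: "I \<subseteq> {1..n-1}" and \<tau>I: "\<tau> \<in> I"
    and \<Delta>: "\<Delta> \<in> Theta d r" and r: "0 \<le> r"
  shows "(\<integral>\<xi>. 1 - psi_lin n d I H (obs \<theta> \<Delta> \<tau> \<xi>) \<partial>noise_space n d) \<le>
    sqrt (exp 1) * exp (H - r\<^sup>2 * real n * hfun n \<tau> / (sqrt (2 * real d) + 2))"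
proof -
  have finI: "finite I" using I finite_subset by blast
  have "\<tau> \<in> {1..n-1}" using \<tau>I I by blast
  then have \<tau>: "1 \<le> \<tau>" "\<tau> < n" by auto
  have "(\<integral>\<xi>. 1 - psi_lin n d I H (obs \<theta> \<Delta> \<tau> \<xi>) \<partial>noise_space n d) \<le>
      sqrt (exp 1) * exp (H - r\<^sup>2 * real n * hfun n \<tau> / (sqrt (2 * real (card {1..d})) + 2))"
  proof (rule cusum_statistic_lower_tail[OF \<tau>])
    show "{1..d} \<subseteq> {1..d}" "{1..d} \<noteq> {}" using d by auto
    show "0 \<le> 1 - psi_lin n d I H X" "1 - psi_lin n d I H X \<le> 1" for X
      by (auto simp: psi_lin_def)
    show "r\<^sup>2 \<le> (\<Sum>j\<in>{1..d}. (\<Delta> j)\<^sup>2)"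
      by (rule Theta_sum_sq_ge[OF \<Delta> r])
    fix \<xi> assume "1 - psi_lin n d I H (obs \<theta> \<Delta> \<tau> \<xi>) \<noteq> 0"
    then have "psi_lin n d I H (obs \<theta> \<Delta> \<tau> \<xi>) \<noteq> 1" by simp
    from L_lin_le_of_not_psi_lin[OF this finI \<tau>I]
    show "((\<Sum>j\<in>{1..d}. (Zn n (obs \<theta> \<Delta> \<tau> \<xi>) \<tau> j)\<^sup>2) - real (card {1..d})) /
        sqrt (2 * real (card {1..d})) \<le> H"
      by (simp add: L_lin_def)
  qed
  then show ?thesis by simp
qed

lemma type_II_error_psi_scan_le:
  assumes d: "1 \<le> d" and I: "I \<subseteq> {1..n-1}" and \<tau>I: "\<tau> \<in> I"
    and \<Delta>: "\<Delta> \<in> Theta d r" and r: "0 \<le> r" and T: "\<forall>p\<in>{1..d}. 0 < T p"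
  obtains p where "p \<in> {1..d}" and
    "(\<integral>\<xi>. 1 - psi_scan n d I T (obs \<theta> \<Delta> \<tau> \<xi>) \<partial>noise_space n d) \<le>
      sqrt (exp 1) * exp (T p - r\<^sup>2 * real n * hfun n \<tau> / (sqrt (2 * real p) + 2))"
proof -
  have finI: "finite I" using I finite_subset by blast
  have "\<tau> \<in> {1..n-1}" using \<tau>I I by blast
  then have \<tau>: "1 \<le> \<tau>" "\<tau> < n" by auto
  obtain m where m: "m \<subseteq> {1..d}" "m \<noteq> {}" and \<Delta>m: "r\<^sup>2 \<le> (\<Sum>j\<in>m. (\<Delta> j)\<^sup>2)"
    using Theta_support[OF \<Delta> r] .
  have p: "card m \<in> {1..d}"
    using m by (auto simp: card_gt_0_iff Suc_le_eq intro: finite_subset card_mono[of "{1..d}", simplified])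
  have "(\<integral>\<xi>. 1 - psi_scan n d I T (obs \<theta> \<Delta> \<tau> \<xi>) \<partial>noise_space n d) \<le>
      sqrt (exp 1) * exp (T (card m) - r\<^sup>2 * real n * hfun n \<tau> / (sqrt (2 * real (card m)) + 2))"
  proof (rule cusum_statistic_lower_tail[OF \<tau> m _ _ _ \<Delta>m])
    show "0 \<le> 1 - psi_scan n d I T X" "1 - psi_scan n d I T X \<le> 1" for X
      by (auto simp: psi_scan_def)
    fix \<xi> assume "1 - psi_scan n d I T (obs \<theta> \<Delta> \<tau> \<xi>) \<noteq> 0"
    then have "psi_scan n d I T (obs \<theta> \<Delta> \<tau> \<xi>) \<noteq> 1" by simp
    from scan_statistic_le_of_not_psi_scan[OF this finI \<tau>I m] T p
    show "((\<Sum>j\<in>m. (Zn n (obs \<theta> \<Delta> \<tau> \<xi>) \<tau> j)\<^sup>2) - real (card m)) / sqrt (2 * real (card m)) \<le>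
        T (card m)"
      by blast
  qed
  with p that show ?thesis by blast
qed

lemma beta_star_psi_lin_le:
  fixes n d :: nat and I :: "nat set" and c1 H r :: real
  defines "D \<equiv> Min ((\<lambda>\<tau>. r\<^sup>2 * real n * hfun n \<tau> / sqrt (2 * real d)) ` I)"
  assumes d: "1 \<le> d" and I: "I \<subseteq> {1..n-1}" "I \<noteq> {}" and r: "0 \<le> r"
    and H: "H \<le> (sqrt 2 - 1 - c1) * D"
  shows "beta_star n d \<theta> (psi_lin n d I H) r I \<le> sqrt (exp 1) * exp (- c1 * D)"
proof (rule beta_star_le[OF I(2) Theta_nonempty[OF d]])
  fix \<tau> \<Delta> assume \<tau>I: "\<tau> \<in> I" and \<Delta>: "\<Delta> \<in> Theta d r"
  define A where "A = r\<^sup>2 * real n * hfun n \<tau>"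
  define s where "s = sqrt (2 * real d)"
  have "\<tau> \<in> {1..n-1}" using \<tau>I I(1) by blast
  then have "\<tau> \<le> n" by auto
  then have A: "0 \<le> A" by (simp add: A_def mult.assoc real_mult_hfun)
  have "finite I" using I(1) finite_subset by blast
  then have "D \<le> A / s"
    unfolding D_def A_def s_def using \<tau>I by (intro Min_le) auto
  then have "(sqrt 2 - 1) * D \<le> (sqrt 2 - 1) * (A / s)"
    by (intro mult_left_mono) auto
  also have "\<dots> \<le> A / (s + 2)"
    using d A by (intro sqrt2_minus_one_mult_divide_le) (auto simp: s_def)
  finally have exponent: "H - A / (s + 2) \<le> - c1 * D"
    using H by (simp add: algebra_simps)
  have "(\<integral>\<xi>. 1 - psi_lin n d I H (obs \<theta> \<Delta> \<tau> \<xi>) \<partial>noise_space n d) \<le>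
      sqrt (exp 1) * exp (H - A / (s + 2))"
    using type_II_error_psi_lin_le[OF d I(1) \<tau>I \<Delta> r] by (simp add: A_def s_def)
  also have "\<dots> \<le> sqrt (exp 1) * exp (- c1 * D)"
    using exponent by simp
  finally show "(\<integral>\<xi>. 1 - psi_lin n d I H (obs \<theta> \<Delta> \<tau> \<xi>) \<partial>noise_space n d) \<le>
      sqrt (exp 1) * exp (- c1 * D)" .
qed

lemma sqrt_mult_one_plus_sqrt:
  assumes "0 < p"
  shows "sqrt (2 * p) * (1 + sqrt (2 / p)) = sqrt (2 * p) + 2"
proof -
  have "sqrt (2 * p) * sqrt (2 / p) = sqrt (2 * 2)"
    using assms by (simp add: real_sqrt_mult[symmetric])
  then show ?thesis by (simp add: distrib_left)
qed

lemma beta_star_psi_scan_le: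
  fixes n d :: nat and I :: "nat set" and r :: real and T :: "nat \<Rightarrow> real"
  defines "c2 \<equiv> \<lambda>p \<tau>. inverse (1 + sqrt (2 / real p)) *
    (r\<^sup>2 * real n * hfun n \<tau> / (T p * sqrt (2 * real p)))"
  assumes d: "1 \<le> d" and I: "I \<subseteq> {1..n-1}" "I \<noteq> {}" and r: "0 \<le> r"
    and T: "\<forall>p\<in>{1..d}. 0 < T p"
  shows "beta_star n d \<theta> (psi_scan n d I T) r I \<le>
    sqrt (exp 1) * exp (- Min ((\<lambda>p. Min ((\<lambda>\<tau>. (c2 p \<tau> - 1) * T p) ` I)) ` {1..d}))"
proof (rule beta_star_le[OF I(2) Theta_nonempty[OF d]])
  fix \<tau> \<Delta> assume \<tau>I: "\<tau> \<in> I" and \<Delta>: "\<Delta> \<in> Theta d r"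
  have finI: "finite I" using I(1) finite_subset by blast
  obtain p where p: "p \<in> {1..d}" and bound:
    "(\<integral>\<xi>. 1 - psi_scan n d I T (obs \<theta> \<Delta> \<tau> \<xi>) \<partial>noise_space n d) \<le>
      sqrt (exp 1) * exp (T p - r\<^sup>2 * real n * hfun n \<tau> / (sqrt (2 * real p) + 2))"
    using type_II_error_psi_scan_le[OF d I(1) \<tau>I \<Delta> r T] .
  have "0 < T p" using T p by blast
  then have "c2 p \<tau> * T p =
      r\<^sup>2 * real n * hfun n \<tau> / (sqrt (2 * real p) * (1 + sqrt (2 / real p)))"
    by (simp add: c2_def inverse_eq_divide mult_ac)
  also have "\<dots> = r\<^sup>2 * real n * hfun n \<tau> / (sqrt (2 * real p) + 2)"
    using p by (simp add: sqrt_mult_one_plus_sqrt)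
  finally have "T p - r\<^sup>2 * real n * hfun n \<tau> / (sqrt (2 * real p) + 2) = - ((c2 p \<tau> - 1) * T p)"
    by (simp add: algebra_simps)
  also have "\<dots> \<le> - Min ((\<lambda>\<tau>. (c2 p \<tau> - 1) * T p) ` I)"
    using finI \<tau>I by (intro neg_le_iff_le[THEN iffD2] Min_le) auto
  also have "\<dots> \<le> - Min ((\<lambda>p. Min ((\<lambda>\<tau>. (c2 p \<tau> - 1) * T p) ` I)) ` {1..d})"
    using p finI I(2) by (intro neg_le_iff_le[THEN iffD2] Min_le) auto
  finally show "(\<integral>\<xi>. 1 - psi_scan n d I T (obs \<theta> \<Delta> \<tau> \<xi>) \<partial>noise_space n d) \<le>
      sqrt (exp 1) * exp (- Min ((\<lambda>p. Min ((\<lambda>\<tau>. (c2 p \<tau> - 1) * T p) ` I)) ` {1..d}))"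
    using bound by (elim order_trans) simp
qed

theorem mainTheorem8:
  fixes n d :: nat and \<theta> :: "nat \<Rightarrow> real" and I :: "nat set" and r :: real
  assumes "n \<ge> 2" and "d \<ge> 1"
    and "I \<subseteq> {1..n-1}" and "I \<noteq> {}" and "r > 0"
  shows "(\<forall>c1 H. 0 < c1 \<and> c1 < sqrt 2 - 1 \<and>
            H \<le> (sqrt 2 - 1 - c1) * Min ((\<lambda>\<tau>. r\<^sup>2 * real n * hfun n \<tau> / sqrt (2 * real d)) ` I)
          \<longrightarrow> beta_star n d \<theta> (psi_lin n d I H) r I
              \<le> sqrt (exp 1) * exp (- c1 * Min ((\<lambda>\<tau>. r\<^sup>2 * real n * hfun n \<tau> / sqrt (2 * real d)) ` I)))
       \<and> (\<forall>T :: nat \<Rightarrow> real. (\<forall>p\<in>{1..d}. T p > 0) \<longrightarrow>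
            (let c2 = (\<lambda>p \<tau>. inverse (1 + sqrt (2 / real p)) *
                         (r\<^sup>2 * real n * hfun n \<tau> / (T p * sqrt (2 * real p))))
             in beta_star n d \<theta> (psi_scan n d I T) r I
                \<le> sqrt (exp 1) * exp (- Min ((\<lambda>p. Min ((\<lambda>\<tau>. (c2 p \<tau> - 1) * T p) ` I)) ` {1..d}))))"
  using beta_star_psi_lin_le[OF assms(2-4)] beta_star_psi_scan_le[OF assms(2-4)] assms(5)
  unfolding Let_def by auto

end
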